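(* Let $N\ge1$, $q$ generic and $s=(s_1,\dots,s_N)$ indeterminates. For every $\theta=(\theta_1,\dots,\theta_N)\in\mathbb{Z}_{\ge0}^N$, the coefficients $e^{B_N/A_{N-1}}_{\theta}(s|q)$ satisfy \[ \sum_{i=1}^N \left( (1-q^{-\theta_i})s_i+(1-q^{\theta_i})s_i^{-1}\right)e^{B_N/A_{N-1}}_{\theta}(s|q) =\sum_{k=1}^N s_N\frac{(-1)^{N-k+1}q^{-\theta_N+\delta_{k,N}}q^{N-k} \prod_{i=k+1}^{N-1}(q^{-\theta_i+\theta_k-1}s_i/s_k)}{\prod_{i=k+1}^{N}(1-q^{-\theta_i+\theta_k -1 } s_i/s_k)(1-q\, q^{-\theta_i+\theta_k-1} s_i/s_k)}\, e^{B_N/A_{N-1}}_{(\theta_1,\ldots, \theta_k-1,\ldots, \theta_N)}(s|q), \] where $\delta_{k,N}$ is the Kronecker delta and empty products equal $1$.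
   Context: Notation: $(a;q)_n:=\prod_{k=1}^n(1-q^{k-1}a)$. For $\theta\in\mathbb{Z}_{\ge0}^N$, \[ e^{B_N/A_{N-1}}_{\theta}(s|q):=\prod_{k=1}^N\frac{q^{(N-k+1)\theta_k}}{(q;q)_{\theta_k}(q/s_k^2;q)_{\theta_k}}\prod_{1\leq i<j\leq N}\frac{1}{(q s_j/s_i;q)_{\theta_i}\,(q^{\theta_j-\theta_i} q s_i/s_j;q)_{\theta_i}}\cdot\frac{(q/s_is_j;q)_{\theta_i+\theta_j}}{(q/s_is_j;q)_{\theta_i}\,(q/s_is_j;q)_{\theta_j}}, \] and $e^{B_N/A_{N-1}}_{\theta}(s|q):=0$ if some entry of $\theta$ is negative. *)

theory Defs
  imports Complex_Main
begin

definition qpoch :: "complex \<Rightarrow> complex \<Rightarrow> nat \<Rightarrow> complex" where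
  "qpoch a q n = (\<Prod>k\<in>{1..n}. (1 - q ^ (k - 1) * a))"

(* e^{B_N/A_{N-1}}_theta(s|q); indices 1..N, theta and s are functions on nat,
   only the values at 1..N matter. Zero if some entry of theta is negative. *)
definition eBA :: "nat \<Rightarrow> (nat \<Rightarrow> int) \<Rightarrow> (nat \<Rightarrow> complex) \<Rightarrow> complex \<Rightarrow> complex" where
  "eBA N \<theta> s q =
    (if \<exists>k\<in>{1..N}. \<theta> k < 0 then 0 else
      (\<Prod>k\<in>{1..N}. q ^ ((N - k + 1) * nat (\<theta> k))
          / (qpoch q q (nat (\<theta> k)) * qpoch (q / (s k)\<^sup>2) q (nat (\<theta> k))))
      * (\<Prod>i\<in>{1..N}. \<Prod>j\<in>{i+1..N}.
          1 / (qpoch (q * s j / s i) q (nat (\<theta> i))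
               * qpoch (q powi (\<theta> j - \<theta> i) * q * s i / s j) q (nat (\<theta> i)))
          * (qpoch (q / (s i * s j)) q (nat (\<theta> i + \<theta> j))
             / (qpoch (q / (s i * s j)) q (nat (\<theta> i)) * qpoch (q / (s i * s j)) q (nat (\<theta> j))))))"

end

(* With the Joukowski map J z = z + 1/z put S_j = J s_j and W_k = J (s_k q^(-theta_k)); the factor
   on the left-hand side is then sum_j S_j - sum_j W_j.  The product formula for e_theta gives the
   ratio e_(theta - eps_k) / e_theta factor by factor, and multiplied by the k-th coefficient on the
   right it becomes - prod_j (W_k - S_j) / prod_(j /= k) (W_k - W_j); for theta_k = 0 both sides
   vanish because W_k = S_k.  Summing over k is Lagrange interpolation of
   prod_j (x - S_j) - prod_j (x - W_j), a polynomial of degree < N with x^(N-1)-coefficient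
   sum_j W_j - sum_j S_j, at the nodes W_k.  Genericity of q and s keeps the W_k distinct and every
   factor that is divided by nonzero. *)

theory Submission
  imports Defs "HOL-Computational_Algebra.Polynomial"
begin

lemma qpoch_Suc: "qpoch a q (Suc n) = qpoch a q n * (1 - q ^ n * a)"
  unfolding qpoch_def by (simp add: atLeastAtMostSuc_conv mult.commute)

lemma qpoch_Suc_shift: "qpoch a q (Suc n) = (1 - a) * qpoch (q * a) q n"
proof (induction n)
  case 0
  then show ?case by (simp add: qpoch_def)
next
  case (Suc n)
  have "qpoch a q (Suc (Suc n)) = (1 - a) * (qpoch (q * a) q n * (1 - q ^ n * (q * a)))"
    using Suc by (simp add: qpoch_Suc[of a q "Suc n"] mult_ac)
  then show ?case by (simp add: qpoch_Suc)
qed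

lemma q_powi_Suc: "q powi int (Suc n) = q ^ n * q"
  for q :: "'a::division_ring"
  by (simp only: power_int_of_nat power_Suc2)

lemma degree_prod_linear: "degree (\<Prod>j\<in>J. [:- a j, 1:]) = card J"
  for a :: "'b \<Rightarrow> 'a::idom"
  by (simp add: degree_prod_eq_sum_degree)

lemma coeff_prod_linear_card: "coeff (\<Prod>j\<in>J. [:- a j, 1:]) (card J) = 1"
  for a :: "'b \<Rightarrow> 'a::idom"
  using lead_coeff_prod[of "\<lambda>j. [:- a j, 1:]" J] by (simp add: degree_prod_linear)

lemma coeff_prod_linear_card_minus_1:
  fixes a :: "'b \<Rightarrow> 'a::idom"
  assumes "finite J" "J \<noteq> {}"
  shows "coeff (\<Prod>j\<in>J. [:- a j, 1:]) (card J - 1) = - (\<Sum>j\<in>J. a j)"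
  using assms
proof (induction J rule: finite_ne_induct)
  case (singleton x)
  then show ?case by simp
next
  case (insert x F)
  then obtain m where m: "card F = Suc m" by (metis card_0_eq not0_implies_Suc)
  have "coeff (\<Prod>j\<in>F. [:- a j, 1:]) (card F) = 1" by (rule coeff_prod_linear_card)
  with insert m show ?case by simp
qed

text \<open>Lagrange interpolation at the nodes \<open>W ` I\<close>, read off at the top coefficient.\<close>

lemma sum_divided_differences_eq_coeff:
  fixes p :: "'a::field poly" and W :: "'b \<Rightarrow> 'a"
  assumes I: "finite I" "inj_on W I" and deg: "degree p < card I"
  shows "(\<Sum>k\<in>I. poly p (W k) / (\<Prod>j\<in>I-{k}. W k - W j)) = coeff p (card I - 1)"
proof -
  define c where "c k = poly p (W k) / (\<Prod>j\<in>I-{k}. W k - W j)" for k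
  define L where "L = (\<Sum>k\<in>I. smult (c k) (\<Prod>j\<in>I-{k}. [:- W j, 1:]))"
  have card_remove: "card (I - {k}) = card I - 1" if "k \<in> I" for k
    using that I by simp
  have "degree L \<le> card I - 1"
    unfolding L_def
    by (intro degree_sum_le[OF I(1)] order.trans[OF degree_smult_le])
       (simp add: degree_prod_linear card_remove)
  then have deg_L: "degree L < card I"
    using deg by linarith
  have "poly L (W m) = poly p (W m)" if m: "m \<in> I" for m
  proof -
    have "poly L (W m) = (\<Sum>k\<in>I. c k * (\<Prod>j\<in>I-{k}. W m - W j))"
      unfolding L_def poly_sum poly_smult poly_prod by simp
    also have "\<dots> = c m * (\<Prod>j\<in>I-{m}. W m - W j)"
      using I(1) m by (subst sum.remove[OF I(1) m]) (auto intro!: sum.neutral prod_zero)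
    also have "\<dots> = poly p (W m)"
      using I m by (auto simp: c_def inj_on_def)
    finally show ?thesis .
  qed
  then have "L = p"
    by (intro poly_eqI_degree[of "W ` I"]) (use deg deg_L card_image[OF I(2)] in auto)
  moreover have "coeff L (card I - 1) = (\<Sum>k\<in>I. c k)"
    unfolding L_def coeff_sum coeff_smult
  proof (intro sum.cong refl)
    fix k assume "k \<in> I"
    then have "coeff (\<Prod>j\<in>I-{k}. [:- W j, 1:]) (card I - 1) = 1"
      using coeff_prod_linear_card[of W "I - {k}"] card_remove by simp
    then show "c k * coeff (\<Prod>j\<in>I-{k}. [:- W j, 1:]) (card I - 1) = c k"
      by simp
  qed
  ultimately show ?thesis
    by (simp add: c_def)
qed

lemma sum_prod_diff_divide_prod_diff:
  fixes W S :: "'b \<Rightarrow> 'a::field"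
  assumes I: "finite I" "inj_on W I"
  shows "(\<Sum>k\<in>I. (\<Prod>j\<in>I. W k - S j) / (\<Prod>j\<in>I-{k}. W k - W j))
       = (\<Sum>i\<in>I. W i) - (\<Sum>i\<in>I. S i)"
proof (cases "I = {}")
  case False
  define p where "p = (\<Prod>j\<in>I. [:- S j, 1:]) - (\<Prod>j\<in>I. [:- W j, 1:])"
  have "poly p (W k) = (\<Prod>j\<in>I. W k - S j)" if "k \<in> I" for k
    using I that by (auto simp: p_def poly_prod intro: prod_zero)
  moreover have "degree p < card I"
  proof -
    have "degree p \<le> card I"
      unfolding p_def by (intro degree_diff_le) (simp_all add: degree_prod_linear)
    moreover have "coeff p (card I) = 0"
      by (simp add: p_def coeff_prod_linear_card)
    moreover have "card I > 0"
      using I False by auto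
    ultimately show ?thesis
      by (metis degree_0 le_neq_implies_less leading_coeff_0_iff)
  qed
  moreover have "coeff p (card I - 1) = (\<Sum>i\<in>I. W i) - (\<Sum>i\<in>I. S i)"
    unfolding p_def coeff_diff coeff_prod_linear_card_minus_1[OF I(1) False] by simp
  ultimately show ?thesis
    using sum_divided_differences_eq_coeff[OF I] by (metis (no_types, lifting) sum.cong)
qed simp

(* Valid also for b = 0, so no q-Pochhammer symbol ever has to be shown nonzero. *)
lemma divide_eq_mult_factors_divide:
  fixes a b \<alpha> \<beta> :: "'a::field"
  assumes "\<alpha> \<noteq> 0" "\<beta> \<noteq> 0"
  shows "a / b = (a * \<alpha>) / (b * \<beta>) * (\<beta> / \<alpha>)"
  using assms by (cases "b = 0") (simp_all add: field_simps)

lemma quotient_rescale_by_relation: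
  fixes P R R' C D E \<beta>1 \<beta>2 \<beta>3 \<beta>4 :: "'a::field"
  assumes "\<beta>1 \<noteq> 0" "\<beta>2 \<noteq> 0" "\<beta>3 \<noteq> 0" "\<beta>4 \<noteq> 0" and "R' * \<beta>1 = \<beta>2 * R"
  shows "1 / (P * R') * (C / (D * E))
       = 1 / (P * R) * ((C * \<beta>4) / (D * (E * \<beta>3))) * (\<beta>1 / \<beta>2 * (\<beta>3 / \<beta>4))"
proof -
  have R': "R' = \<beta>2 * R / \<beta>1"
    using assms by (simp add: field_simps)
  show ?thesis
    unfolding R' using assms(1-4) by (cases "P * R * D * E = 0") (auto simp: field_simps)
qed

lemma prod_upper_triangle_delta:
  fixes a b :: "nat \<Rightarrow> 'a::comm_monoid_mult"
  assumes k: "k \<in> {1..N}"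
  shows "(\<Prod>i\<in>{1..N}. \<Prod>j\<in>{i+1..N}. if i = k then a j else if j = k then b i else 1)
       = (\<Prod>j\<in>{k+1..N}. a j) * (\<Prod>i\<in>{1..k-1}. b i)"
proof -
  have inner: "(\<Prod>j\<in>{i+1..N}. if i = k then a j else if j = k then b i else 1)
      = (if i = k then \<Prod>j\<in>{k+1..N}. a j else 1) * (if i \<in> {1..k-1} then b i else 1)"
    if "i \<in> {1..N}" for i
  proof (cases "i = k")
    case False
    then have "(\<Prod>j\<in>{i+1..N}. if i = k then a j else if j = k then b i else 1)
        = (if k \<in> {i+1..N} then b i else 1)"
      by (simp add: prod.delta)
    with False that k show ?thesis
      by auto
  qed auto
  have "(\<Prod>i\<in>{1..N}. \<Prod>j\<in>{i+1..N}. if i = k then a j else if j = k then b i else 1)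
      = (\<Prod>i\<in>{1..N}. (if i = k then \<Prod>j\<in>{k+1..N}. a j else 1)
                         * (if i \<in> {1..k-1} then b i else 1))"
    by (rule prod.cong[OF refl inner])
  also have "\<dots> = (\<Prod>i\<in>{1..N}. if i = k then \<Prod>j\<in>{k+1..N}. a j else 1)
        * (\<Prod>i\<in>{1..N}. if i \<in> {1..k-1} then b i else 1)"
    by (rule prod.distrib)
  also have "(\<Prod>i\<in>{1..N}. if i = k then \<Prod>j\<in>{k+1..N}. a j else 1) = (\<Prod>j\<in>{k+1..N}. a j)"
    using k by (simp add: prod.delta)
  also have "(\<Prod>i\<in>{1..N}. if i \<in> {1..k-1} then b i else 1) = prod b ({1..N} \<inter> {1..k-1})"
    by (rule prod.inter_restrict[symmetric]) simp
  also have "{1..N} \<inter> {1..k-1} = {1..k-1}"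
    using k by auto
  finally show ?thesis .
qed

definition single_factor ::
    "nat \<Rightarrow> complex \<Rightarrow> (nat \<Rightarrow> complex) \<Rightarrow> nat \<Rightarrow> int \<Rightarrow> complex" where
  "single_factor N q s k x =
     q ^ ((N - k + 1) * nat x) / (qpoch q q (nat x) * qpoch (q / (s k)\<^sup>2) q (nat x))"

definition pair_factor ::
    "complex \<Rightarrow> (nat \<Rightarrow> complex) \<Rightarrow> nat \<Rightarrow> nat \<Rightarrow> int \<Rightarrow> int \<Rightarrow> complex" where
  "pair_factor q s i j x y =
     1 / (qpoch (q * s j / s i) q (nat x) * qpoch (q powi (y - x) * q * s i / s j) q (nat x))
     * (qpoch (q / (s i * s j)) q (nat (x + y))
        / (qpoch (q / (s i * s j)) q (nat x) * qpoch (q / (s i * s j)) q (nat y)))"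

lemma eBA_eq_prod_factors:
  assumes "\<forall>k\<in>{1..N}. \<theta> k \<ge> 0"
  shows "eBA N \<theta> s q = (\<Prod>k\<in>{1..N}. single_factor N q s k (\<theta> k))
                      * (\<Prod>i\<in>{1..N}. \<Prod>j\<in>{i+1..N}. pair_factor q s i j (\<theta> i) (\<theta> j))"
  using assms unfolding eBA_def single_factor_def pair_factor_def by (auto simp: not_less)

lemma single_factor_decrement:
  assumes x: "1 \<le> x" and nz: "q \<noteq> 0" "1 - q powi x \<noteq> 0" "1 - q powi x / (s k)\<^sup>2 \<noteq> 0"
  shows "single_factor N q s k (x - 1)
       = single_factor N q s k x * ((1 - q powi x) * (1 - q powi x / (s k)\<^sup>2) / q ^ (N - k + 1))"
proof -
  define n where "n = nat (x - 1)"
  have n: "x = int (Suc n)"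
    using x unfolding n_def by simp
  let ?e = "N - k + 1" and ?c = "q / (s k)\<^sup>2"
  have lower: "single_factor N q s k (x - 1) = q ^ (?e * n) / (qpoch q q n * qpoch ?c q n)"
    unfolding single_factor_def n_def ..
  have upper: "single_factor N q s k x
      = q ^ (?e * n) * q ^ ?e / (qpoch q q n * qpoch ?c q n * ((1 - q powi x) * (1 - q powi x / (s k)\<^sup>2)))"
    unfolding single_factor_def n q_powi_Suc nat_int by (simp add: qpoch_Suc power_add mult_ac)
  show ?thesis
    unfolding lower upper by (rule divide_eq_mult_factors_divide) (use nz in auto)
qed

definition pair_factor_ratio_left :: "'a::field \<Rightarrow> 'a \<Rightarrow> 'a \<Rightarrow> 'a \<Rightarrow> 'a \<Rightarrow> 'a" where
  "pair_factor_ratio_left q A B u v =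
     (1 - A * v / u) * (1 - q * B * u / (A * v)) * (1 - A / (u * v)) / (1 - A * B / (u * v))"

definition pair_factor_ratio_right :: "'a::field \<Rightarrow> 'a \<Rightarrow> 'a \<Rightarrow> 'a \<Rightarrow> 'a" where
  "pair_factor_ratio_right A B u v =
     (1 - B * u / v) / (1 - B * u / (A * v)) * ((1 - B / (u * v)) / (1 - A * B / (u * v)))"

lemma pair_factor_decrement_left:
  fixes q :: complex and s :: "nat \<Rightarrow> complex" and i j :: nat and x y :: int
  assumes x: "1 \<le> x" and y: "0 \<le> y"
  defines "A \<equiv> q powi x" and "B \<equiv> q powi y" and "u \<equiv> s i" and "v \<equiv> s j"
  assumes nz: "q \<noteq> 0" "1 - A * v / u \<noteq> 0" "1 - q * B * u / (A * v) \<noteq> 0"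
    "1 - A / (u * v) \<noteq> 0" "1 - A * B / (u * v) \<noteq> 0"
  shows "pair_factor q s i j (x - 1) y = pair_factor q s i j x y * pair_factor_ratio_left q A B u v"
proof -
  define n m where "n = nat (x - 1)" and "m = nat y"
  have nm: "nat x = Suc n" "nat y = m" "nat (x - 1) = n" "nat (x + y) = Suc (n + m)" "nat (x - 1 + y) = n + m"
    using x y unfolding n_def m_def by auto
  have xy: "x = int (Suc n)" "y = int m"
    using x y unfolding n_def m_def by simp_all
  have AB: "A = q ^ n * q" "B = q ^ m"
    unfolding A_def B_def xy q_powi_Suc by simp_all
  let ?P = "qpoch (q * v / u) q" and ?R = "\<lambda>z. qpoch (q powi z * q * u / v) q" and ?C = "qpoch (q / (u * v)) q"
  have shift: "q * (q powi (y - x) * q * u / v) = q powi (y - (x - 1)) * q * u / v"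
    using nz(1) by (simp add: power_int_add power_int_diff field_simps)
  have base: "q powi (y - x) * q * u / v = q * B * u / (A * v)"
    using nz(1) unfolding A_def B_def by (simp add: power_int_diff field_simps)
  have R_Suc: "?R (y - x) (Suc n) = (1 - q * B * u / (A * v)) * ?R (y - (x - 1)) n"
    unfolding qpoch_Suc_shift shift base[symmetric] ..
  have "pair_factor q s i j x y
      = 1 / ((?P n * (1 - A * v / u)) * ((1 - q * B * u / (A * v)) * ?R (y - (x - 1)) n))
        * ((?C (n + m) * (1 - A * B / (u * v))) / ((?C n * (1 - A / (u * v))) * ?C m))"
    unfolding pair_factor_def u_def[symmetric] v_def[symmetric] nm R_Suc[symmetric] qpoch_Suc
    by (simp add: AB power_add mult_ac)
  also have "\<dots> = (?C (n + m) * (1 - A * B / (u * v)))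
        / (?P n * ?R (y - (x - 1)) n * ?C n * ?C m
           * ((1 - A * v / u) * (1 - q * B * u / (A * v)) * (1 - A / (u * v))))"
    by (simp add: mult_ac)
  finally have upper: "pair_factor q s i j x y
      = (?C (n + m) * (1 - A * B / (u * v)))
        / (?P n * ?R (y - (x - 1)) n * ?C n * ?C m
           * ((1 - A * v / u) * (1 - q * B * u / (A * v)) * (1 - A / (u * v))))" .
  have lower: "pair_factor q s i j (x - 1) y = ?C (n + m) / (?P n * ?R (y - (x - 1)) n * ?C n * ?C m)"
    unfolding pair_factor_def u_def[symmetric] v_def[symmetric] nm by (simp add: mult_ac)
  show ?thesis
    unfolding upper lower pair_factor_ratio_left_def
    by (rule divide_eq_mult_factors_divide) (use nz in auto)
qed

lemma pair_factor_decrement_right: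
  fixes q :: complex and s :: "nat \<Rightarrow> complex" and i j :: nat and x y :: int
  assumes x: "0 \<le> x" and y: "1 \<le> y"
  defines "A \<equiv> q powi x" and "B \<equiv> q powi y" and "u \<equiv> s i" and "v \<equiv> s j"
  assumes nz: "q \<noteq> 0" "1 - B * u / v \<noteq> 0" "1 - B * u / (A * v) \<noteq> 0"
    "1 - B / (u * v) \<noteq> 0" "1 - A * B / (u * v) \<noteq> 0"
  shows "pair_factor q s i j x (y - 1) = pair_factor q s i j x y * pair_factor_ratio_right A B u v"
proof -
  define m n where "m = nat x" and "n = nat (y - 1)"
  have nm: "nat x = m" "nat y = Suc n" "nat (y - 1) = n" "nat (x + y) = Suc (m + n)" "nat (x + (y - 1)) = m + n"
    using x y unfolding n_def m_def by auto
  have xy: "x = int m" "y = int (Suc n)"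
    using x y unfolding n_def m_def by simp_all
  have AB: "A = q ^ m" "B = q ^ n * q"
    unfolding A_def B_def xy q_powi_Suc by simp_all
  let ?P = "qpoch (q * v / u) q" and ?R = "\<lambda>z. qpoch (q powi z * q * u / v) q" and ?C = "qpoch (q / (u * v)) q"
  have shift: "q * (q powi (y - 1 - x) * q * u / v) = q powi (y - x) * q * u / v"
    using nz(1) by (simp add: power_int_add power_int_diff field_simps)
  have base: "q powi (y - 1 - x) * q * u / v = B * u / (A * v)"
    using nz(1) unfolding A_def B_def by (simp add: power_int_add power_int_diff field_simps)
  have top: "q ^ m * (q powi (y - 1 - x) * q * u / v) = B * u / v"
    using nz(1) unfolding base AB(1) A_def by simp
  have "?R (y - 1 - x) (Suc m) = ?R (y - 1 - x) m * (1 - B * u / v)"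
    unfolding qpoch_Suc top ..
  moreover have "?R (y - 1 - x) (Suc m) = (1 - B * u / (A * v)) * ?R (y - x) m"
    unfolding base[symmetric] qpoch_Suc_shift shift ..
  ultimately have R_rel: "?R (y - 1 - x) m * (1 - B * u / v) = (1 - B * u / (A * v)) * ?R (y - x) m"
    by simp
  have upper: "pair_factor q s i j x y
      = 1 / (?P m * ?R (y - x) m) * ((?C (m + n) * (1 - A * B / (u * v))) / (?C m * (?C n * (1 - B / (u * v)))))"
    unfolding pair_factor_def u_def[symmetric] v_def[symmetric] nm qpoch_Suc
    by (simp add: AB power_add mult_ac)
  have lower: "pair_factor q s i j x (y - 1) = 1 / (?P m * ?R (y - 1 - x) m) * (?C (m + n) / (?C m * ?C n))"
    unfolding pair_factor_def u_def[symmetric] v_def[symmetric] nm ..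
  show ?thesis
    unfolding upper lower pair_factor_ratio_right_def by (rule quotient_rescale_by_relation[OF nz(2-5) R_rel])
qed

definition joukowski :: "'a::field \<Rightarrow> 'a" where
  "joukowski z = z + 1 / z"

lemma joukowski_divide_diff:
  fixes A B u v :: "'a::field"
  assumes "A \<noteq> 0" "B \<noteq> 0" "u \<noteq> 0" "v \<noteq> 0"
  shows "joukowski (u / A) - joukowski (v / B) = (B * u - A * v) * (u * v - A * B) / (A * B * u * v)"
  using assms by (simp add: joukowski_def field_simps)

lemma pair_factor_ratio_left_eq_joukowski:
  fixes q A B u v :: "'a::field"
  assumes nz: "q \<noteq> 0" "A \<noteq> 0" "B \<noteq> 0" "u \<noteq> 0" "v \<noteq> 0"
    and "q * B * u \<noteq> A * v" "B * u \<noteq> A * v" "u * v \<noteq> A * B"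
  defines "Z \<equiv> A * v / (q * B * u)"
  shows "- (q * Z) / ((1 - Z) * (1 - q * Z)) * pair_factor_ratio_left q A B u v
         = q * ((joukowski (u / A) - joukowski v) / (joukowski (u / A) - joukowski (v / B)))"
proof -
  define X Y D where "X = q * B * u - A * v" and "Y = B * u - A * v" and "D = u * v - A * B"
  have XYD: "X \<noteq> 0" "Y \<noteq> 0" "D \<noteq> 0"
    using assms unfolding X_def Y_def D_def by auto
  have factors: "1 - Z = X / (q * B * u)" "1 - q * Z = Y / (B * u)"
    "1 - q * B * u / (A * v) = - X / (A * v)" "1 - A * B / (u * v) = D / (u * v)"
    using nz unfolding Z_def X_def Y_def D_def by (simp_all add: field_simps)
  have differences: "joukowski (u / A) - joukowski v = (u - A * v) * (u * v - A) / (A * u * v)"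
    "joukowski (u / A) - joukowski (v / B) = Y * D / (A * B * u * v)"
    using nz joukowski_divide_diff[of A 1 u v] joukowski_divide_diff[OF nz(2-5)]
    unfolding Y_def D_def by simp_all
  show ?thesis
    unfolding pair_factor_ratio_left_def factors differences using nz XYD unfolding Z_def
    by (simp add: field_simps)
qed

lemma pair_factor_ratio_right_eq_joukowski:
  fixes A B u v :: "'a::field"
  assumes nz: "A \<noteq> 0" "B \<noteq> 0" "u \<noteq> 0" "v \<noteq> 0"
    and "A * v \<noteq> B * u" "u * v \<noteq> A * B"
  shows "pair_factor_ratio_right A B u v
         = (joukowski (v / B) - joukowski u) / (joukowski (v / B) - joukowski (u / A))"
proof -
  define Y D where "Y = A * v - B * u" and "D = u * v - A * B"
  have YD: "Y \<noteq> 0" "D \<noteq> 0"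
    using assms unfolding Y_def D_def by auto
  have factors: "1 - B * u / (A * v) = Y / (A * v)" "1 - A * B / (u * v) = D / (u * v)"
    using nz unfolding Y_def D_def by (simp_all add: field_simps)
  have differences: "joukowski (v / B) - joukowski u = (v - B * u) * (u * v - B) / (B * u * v)"
    "joukowski (v / B) - joukowski (u / A) = Y * D / (A * B * u * v)"
    using nz joukowski_divide_diff[of B 1 v u] joukowski_divide_diff[of B A v u]
    unfolding Y_def D_def by (simp_all add: field_simps)
  show ?thesis
    unfolding pair_factor_ratio_right_def factors differences using nz YD by (simp add: field_simps)
qed

definition rhs_coefficient ::
    "nat \<Rightarrow> complex \<Rightarrow> (nat \<Rightarrow> complex) \<Rightarrow> (nat \<Rightarrow> int) \<Rightarrow> nat \<Rightarrow> complex" where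
  "rhs_coefficient N q s \<theta> k =
     s N * ((-1) ^ (N - k + 1) * q powi (- \<theta> N + (if k = N then 1 else 0)) * q ^ (N - k)
            * (\<Prod>i\<in>{k+1..N-1}. q powi (- \<theta> i + \<theta> k - 1) * s i / s k))
     / (\<Prod>i\<in>{k+1..N}. (1 - q powi (- \<theta> i + \<theta> k - 1) * s i / s k)
                        * (1 - q * q powi (- \<theta> i + \<theta> k - 1) * s i / s k))"

lemma rhs_coefficient_eq_prod:
  fixes q :: complex and s :: "nat \<Rightarrow> complex" and \<theta> :: "nat \<Rightarrow> int"
  assumes k: "1 \<le> k" "k \<le> N" and nz: "q \<noteq> 0" "s k \<noteq> 0"
  defines "Z \<equiv> \<lambda>i. q powi (- \<theta> i + \<theta> k - 1) * s i / s k"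
  shows "rhs_coefficient N q s \<theta> k
       = - (q * s k / q powi \<theta> k) * (\<Prod>j\<in>{k+1..N}. - (q * Z j) / ((1 - Z j) * (1 - q * Z j)))"
proof -
  let ?D = "\<Prod>j\<in>{k+1..N}. (1 - Z j) * (1 - q * Z j)"
  have coeff: "rhs_coefficient N q s \<theta> k
      = s N * ((-1) ^ (N - k + 1) * q powi (- \<theta> N + (if k = N then 1 else 0)) * q ^ (N - k)
               * (\<Prod>i\<in>{k+1..N-1}. Z i)) / ?D"
    unfolding rhs_coefficient_def Z_def by (simp add: mult.assoc)
  show ?thesis
  proof (cases "k = N")
    case True
    then show ?thesis
      unfolding coeff using nz by (simp add: power_int_diff power_int_minus field_simps)
  next
    case False
    define M where "M = N - k - 1"
    have N: "{k+1..N} = insert N {k+1..N-1}" "N - k = Suc M" "N - k + 1 = Suc (Suc M)"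
      using k False unfolding M_def by auto
    define P E where "P = (\<Prod>i\<in>{k+1..N-1}. Z i)" and "E = (- q) ^ M"
    have "(\<Prod>j\<in>{k+1..N}. - (q * Z j)) = - (q * Z N) * (\<Prod>j\<in>{k+1..N-1}. - q * Z j)"
      unfolding N(1) by (subst prod.insert) auto
    also have "(\<Prod>j\<in>{k+1..N-1}. - q * Z j) = E * P"
      unfolding prod.distrib E_def P_def M_def by simp
    finally have numerator: "(\<Prod>j\<in>{k+1..N}. - (q * Z j)) = - (q * Z N) * (E * P)" .
    have ZN: "Z N = q powi \<theta> k * s N / (q * q powi \<theta> N * s k)"
      unfolding Z_def using nz by (simp add: power_int_add power_int_diff power_int_minus field_simps)
    have sign: "(-1) ^ (N - k + 1) * q powi (- \<theta> N + (if k = N then 1 else 0)) * q ^ (N - k)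
        = E * q / q powi \<theta> N"
      unfolding N(2,3) E_def using False by (simp add: power_minus[of q] power_int_minus divide_inverse mult_ac)
    show ?thesis
      unfolding coeff prod_dividef P_def[symmetric] numerator ZN sign using nz by (simp add: field_simps)
  qed
qed

locale generic_parameters =
  fixes N :: nat and q :: complex and s :: "nat \<Rightarrow> complex"
  assumes q_nonzero: "q \<noteq> 0" and s_nonzero: "\<forall>i\<in>{1..N}. s i \<noteq> 0"
    and generic: "\<forall>(a::int) (b::nat \<Rightarrow> int). (a \<noteq> 0 \<or> (\<exists>i\<in>{1..N}. b i \<noteq> 0))
                   \<longrightarrow> q powi a * (\<Prod>i\<in>{1..N}. s i powi b i) \<noteq> 1"
begin

lemma q_powi_ne_1: "a \<noteq> 0 \<Longrightarrow> q powi a \<noteq> 1"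
  using generic[rule_format, of a "\<lambda>_. 0"] by simp

lemma monomial_one_index_ne_1:
  assumes "k \<in> {1..N}" "c \<noteq> 0"
  shows "q powi a * s k powi c \<noteq> 1"
proof -
  have "(\<Prod>i\<in>{1..N}. s i powi (if i = k then c else 0)) = s k powi c"
    using assms by (simp add: if_distrib prod.delta cong: if_cong)
  then show ?thesis
    using generic[rule_format, of a "\<lambda>i. if i = k then c else 0"] assms by auto
qed

lemma monomial_two_indices_ne_1:
  assumes "j \<in> {1..N}" "k \<in> {1..N}" "j \<noteq> k" "c \<noteq> 0"
  shows "q powi a * s j powi c * s k powi d \<noteq> 1"
proof -
  have "(\<Prod>i\<in>{1..N}. s i powi (if i = j then c else if i = k then d else 0))
      = (\<Prod>i\<in>{1..N}. (if i = j then s j powi c else 1) * (if i = k then s k powi d else 1))"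
    using assms by (intro prod.cong) auto
  also have "\<dots> = s j powi c * s k powi d"
    using assms by (simp add: prod.distrib prod.delta)
  finally have prod_eq: "(\<Prod>i\<in>{1..N}. s i powi (if i = j then c else if i = k then d else 0))
      = s j powi c * s k powi d" .
  have "\<exists>i\<in>{1..N}. (if i = j then c else if i = k then d else 0) \<noteq> 0"
    using assms by (intro bexI[of _ j]) auto
  from generic[rule_format, OF disjI2[OF this], of a] show ?thesis
    unfolding prod_eq by (simp add: mult.assoc)
qed

lemma q_powi_ne_s_square:
  assumes "k \<in> {1..N}"
  shows "q powi a \<noteq> (s k)\<^sup>2"
  using monomial_one_index_ne_1[OF assms, of "-2" a] s_nonzero assms
  by (auto simp: power_int_minus power2_eq_square field_simps)

lemma q_powi_s_ne_q_powi_s: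
  assumes "j \<in> {1..N}" "k \<in> {1..N}" "j \<noteq> k"
  shows "q powi a * s j \<noteq> q powi b * s k"
  using monomial_two_indices_ne_1[OF assms, of 1 "a - b" "-1"] s_nonzero q_nonzero assms
  by (auto simp: power_int_diff power_int_minus field_simps)

lemma s_mult_s_ne_q_powi:
  assumes "j \<in> {1..N}" "k \<in> {1..N}" "j \<noteq> k"
  shows "s j * s k \<noteq> q powi a"
  using monomial_two_indices_ne_1[OF assms, of "-1" a "-1"] s_nonzero assms
  by (auto simp: power_int_minus field_simps)

lemma joukowski_inj_on: "inj_on (\<lambda>i. joukowski (s i / q powi \<theta> i)) {1..N}"
proof (rule inj_onI, rule ccontr)
  fix j k assume j: "j \<in> {1..N}" and k: "k \<in> {1..N}" and jk: "j \<noteq> k"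
    and eq: "joukowski (s j / q powi \<theta> j) = joukowski (s k / q powi \<theta> k)"
  have "q powi \<theta> k * s j \<noteq> q powi \<theta> j * s k"
    using q_powi_s_ne_q_powi_s[OF j k jk] .
  moreover have "s j * s k \<noteq> q powi \<theta> j * q powi \<theta> k"
    using s_mult_s_ne_q_powi[OF j k jk, of "\<theta> j + \<theta> k"] q_nonzero by (simp add: power_int_add)
  ultimately show False
    using eq joukowski_divide_diff[of "q powi \<theta> j" "q powi \<theta> k" "s j" "s k"] s_nonzero j k q_nonzero
    by auto
qed

lemma eBA_decrement:
  assumes \<theta>: "\<forall>i\<in>{1..N}. \<theta> i \<ge> 0" and k: "k \<in> {1..N}" and pos: "1 \<le> \<theta> k"
  shows "eBA N (\<theta>(k := \<theta> k - 1)) s q = eBA N \<theta> s q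
     * ((1 - q powi \<theta> k) * (1 - q powi \<theta> k / (s k)\<^sup>2) / q ^ (N - k + 1)
        * (\<Prod>j\<in>{k+1..N}. pair_factor_ratio_left q (q powi \<theta> k) (q powi \<theta> j) (s k) (s j))
        * (\<Prod>i\<in>{1..k-1}. pair_factor_ratio_right (q powi \<theta> i) (q powi \<theta> k) (s i) (s k)))"
    (is "_ = _ * (?F * (\<Prod>j\<in>_. ?L j) * (\<Prod>i\<in>_. ?R i))")
proof -
  define \<theta>' where "\<theta>' = \<theta>(k := \<theta> k - 1)"
  have \<theta>': "\<forall>i\<in>{1..N}. \<theta>' i \<ge> 0"
    using \<theta> pos unfolding \<theta>'_def by auto
  have sk: "s k \<noteq> 0"
    using s_nonzero k by blast
  have single: "single_factor N q s i (\<theta>' i) = single_factor N q s i (\<theta> i) * (if i = k then ?F else 1)"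
    for i
  proof (cases "i = k")
    case True
    have "1 - q powi \<theta> k \<noteq> 0"
      using q_powi_ne_1[of "\<theta> k"] pos by auto
    moreover have "1 - q powi \<theta> k / (s k)\<^sup>2 \<noteq> 0"
      using q_powi_ne_s_square[OF k, of "\<theta> k"] sk by (auto simp: field_simps)
    ultimately show ?thesis
      using single_factor_decrement[OF pos q_nonzero] True unfolding \<theta>'_def by simp
  qed (simp add: \<theta>'_def)
  have pair: "pair_factor q s i j (\<theta>' i) (\<theta>' j)
      = pair_factor q s i j (\<theta> i) (\<theta> j) * (if i = k then ?L j else if j = k then ?R i else 1)"
    if i: "i \<in> {1..N}" and j: "j \<in> {i+1..N}" for i j
  proof -
    have j': "j \<in> {1..N}" and ij: "i \<noteq> j"
      using i j by auto
    have si: "s i \<noteq> 0" and sj: "s j \<noteq> 0"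
      using s_nonzero i j' by auto
    consider "i = k" | "j = k" | "i \<noteq> k" "j \<noteq> k"
      by blast
    then show ?thesis
    proof cases
      case 1
      have "pair_factor q s k j (\<theta> k - 1) (\<theta> j) = pair_factor q s k j (\<theta> k) (\<theta> j) * ?L j"
      proof (rule pair_factor_decrement_left[OF pos _ q_nonzero])
        show "0 \<le> \<theta> j"
          using \<theta> j' by blast
        show "1 - q powi \<theta> k * s j / s k \<noteq> 0"
          using q_powi_s_ne_q_powi_s[OF j' k, of "\<theta> k" 0] 1 ij sk by (auto simp: field_simps)
        show "1 - q * q powi \<theta> j * s k / (q powi \<theta> k * s j) \<noteq> 0"
          using q_powi_s_ne_q_powi_s[OF k j', of "\<theta> j + 1" "\<theta> k"] 1 ij sj q_nonzero
          by (auto simp: power_int_add field_simps)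
        show "1 - q powi \<theta> k / (s k * s j) \<noteq> 0"
          using s_mult_s_ne_q_powi[OF k j', of "\<theta> k"] 1 ij sj sk by (auto simp: field_simps)
        show "1 - q powi \<theta> k * q powi \<theta> j / (s k * s j) \<noteq> 0"
          using s_mult_s_ne_q_powi[OF k j', of "\<theta> k + \<theta> j"] 1 ij sj sk q_nonzero
          by (auto simp: power_int_add field_simps)
      qed
      with 1 ij show ?thesis
        unfolding \<theta>'_def by simp
    next
      case 2
      have "pair_factor q s i k (\<theta> i) (\<theta> k - 1) = pair_factor q s i k (\<theta> i) (\<theta> k) * ?R i"
      proof (rule pair_factor_decrement_right[OF _ pos q_nonzero])
        show "0 \<le> \<theta> i"
          using \<theta> i by blast
        show "1 - q powi \<theta> k * s i / s k \<noteq> 0"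
          using q_powi_s_ne_q_powi_s[OF i k, of "\<theta> k" 0] 2 ij sk by (auto simp: field_simps)
        show "1 - q powi \<theta> k * s i / (q powi \<theta> i * s k) \<noteq> 0"
          using q_powi_s_ne_q_powi_s[OF i k, of "\<theta> k" "\<theta> i"] 2 ij sk q_nonzero
          by (auto simp: field_simps)
        show "1 - q powi \<theta> k / (s i * s k) \<noteq> 0"
          using s_mult_s_ne_q_powi[OF i k, of "\<theta> k"] 2 ij si sk by (auto simp: field_simps)
        show "1 - q powi \<theta> i * q powi \<theta> k / (s i * s k) \<noteq> 0"
          using s_mult_s_ne_q_powi[OF i k, of "\<theta> i + \<theta> k"] 2 ij si sk q_nonzero
          by (auto simp: power_int_add field_simps)
      qed
      with 2 ij show ?thesis
        unfolding \<theta>'_def by simp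
    next
      case 3
      then show ?thesis
        unfolding \<theta>'_def by simp
    qed
  qed
  have singles: "(\<Prod>i\<in>{1..N}. single_factor N q s i (\<theta>' i))
      = (\<Prod>i\<in>{1..N}. single_factor N q s i (\<theta> i)) * ?F"
    using k by (simp add: single prod.distrib prod.delta)
  have "(\<Prod>i\<in>{1..N}. \<Prod>j\<in>{i+1..N}. pair_factor q s i j (\<theta>' i) (\<theta>' j))
      = (\<Prod>i\<in>{1..N}. \<Prod>j\<in>{i+1..N}. pair_factor q s i j (\<theta> i) (\<theta> j)
                                    * (if i = k then ?L j else if j = k then ?R i else 1))"
    by (intro prod.cong refl) (simp add: pair)
  also have "\<dots> = (\<Prod>i\<in>{1..N}. \<Prod>j\<in>{i+1..N}. pair_factor q s i j (\<theta> i) (\<theta> j))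
        * (\<Prod>i\<in>{1..N}. \<Prod>j\<in>{i+1..N}. if i = k then ?L j else if j = k then ?R i else 1)"
    by (simp only: prod.distrib)
  also have "(\<Prod>i\<in>{1..N}. \<Prod>j\<in>{i+1..N}. if i = k then ?L j else if j = k then ?R i else 1)
      = (\<Prod>j\<in>{k+1..N}. ?L j) * (\<Prod>i\<in>{1..k-1}. ?R i)"
    by (rule prod_upper_triangle_delta[OF k])
  finally have pairs: "(\<Prod>i\<in>{1..N}. \<Prod>j\<in>{i+1..N}. pair_factor q s i j (\<theta>' i) (\<theta>' j))
      = (\<Prod>i\<in>{1..N}. \<Prod>j\<in>{i+1..N}. pair_factor q s i j (\<theta> i) (\<theta> j))
        * ((\<Prod>j\<in>{k+1..N}. ?L j) * (\<Prod>i\<in>{1..k-1}. ?R i))" .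
  show ?thesis
    unfolding \<theta>'_def[symmetric] eBA_eq_prod_factors[OF \<theta>] eBA_eq_prod_factors[OF \<theta>'] singles pairs
    by (simp only: ac_simps)
qed

lemma rhs_term_eq:
  assumes \<theta>: "\<forall>i\<in>{1..N}. \<theta> i \<ge> 0" and k: "k \<in> {1..N}"
  defines "W \<equiv> \<lambda>i. joukowski (s i / q powi \<theta> i)" and "S \<equiv> \<lambda>i. joukowski (s i)"
  shows "rhs_coefficient N q s \<theta> k * eBA N (\<theta>(k := \<theta> k - 1)) s q
       = - eBA N \<theta> s q * ((\<Prod>j\<in>{1..N}. W k - S j) / (\<Prod>j\<in>{1..N}-{k}. W k - W j))"
proof (cases "\<theta> k = 0")
  case True
  then have "eBA N (\<theta>(k := \<theta> k - 1)) s q = 0"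
    using k unfolding eBA_def by auto
  moreover have "(\<Prod>j\<in>{1..N}. W k - S j) = 0"
    using k True by (intro prod_zero) (auto simp: W_def S_def)
  ultimately show ?thesis
    by simp
next
  case False
  then have pos: "1 \<le> \<theta> k"
    using \<theta> k by force
  have sk: "s k \<noteq> 0"
    using s_nonzero k by blast
  define A where "A = q powi \<theta> k"
  have A: "A \<noteq> 0"
    using q_nonzero unfolding A_def by simp
  define \<phi> where "\<phi> j = (W k - S j) / (W k - W j)" for j
  define Z where "Z j = q powi (- \<theta> j + \<theta> k - 1) * s j / s k" for j
  define \<rho> where "\<rho> = (1 - A) * (1 - A / (s k)\<^sup>2) / q ^ (N - k + 1)"
  define L where "L j = pair_factor_ratio_left q A (q powi \<theta> j) (s k) (s j)" for j
  define R where "R i = pair_factor_ratio_right (q powi \<theta> i) A (s i) (s k)" for i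
  have coefficient: "rhs_coefficient N q s \<theta> k
      = - (q * s k / A) * (\<Prod>j\<in>{k+1..N}. - (q * Z j) / ((1 - Z j) * (1 - q * Z j)))"
    unfolding A_def Z_def using k q_nonzero sk by (intro rhs_coefficient_eq_prod) auto
  have decrement: "eBA N (\<theta>(k := \<theta> k - 1)) s q
      = eBA N \<theta> s q * (\<rho> * (\<Prod>j\<in>{k+1..N}. L j) * (\<Prod>i\<in>{1..k-1}. R i))"
    unfolding \<rho>_def L_def R_def A_def by (rule eBA_decrement[OF \<theta> k pos])
  have left: "- (q * Z j) / ((1 - Z j) * (1 - q * Z j)) * L j = q * \<phi> j" if j: "j \<in> {k+1..N}" for j
  proof -
    have j': "j \<in> {1..N}" and jk: "j \<noteq> k"
      using j k by auto
    have "Z j = A * s j / (q * q powi \<theta> j * s k)"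
      unfolding Z_def A_def using q_nonzero by (simp add: power_int_add power_int_diff power_int_minus field_simps)
    moreover have "q * q powi \<theta> j * s k \<noteq> A * s j"
      using q_powi_s_ne_q_powi_s[OF k j' jk[symmetric], of "\<theta> j + 1" "\<theta> k"] q_nonzero
      unfolding A_def by (simp add: power_int_add mult.commute)
    moreover have "q powi \<theta> j * s k \<noteq> A * s j"
      using q_powi_s_ne_q_powi_s[OF k j' jk[symmetric]] unfolding A_def .
    moreover have "s k * s j \<noteq> A * q powi \<theta> j"
      using s_mult_s_ne_q_powi[OF k j' jk[symmetric], of "\<theta> k + \<theta> j"] q_nonzero
      unfolding A_def by (simp add: power_int_add)
    ultimately show ?thesis
      using pair_factor_ratio_left_eq_joukowski[OF q_nonzero A _ sk, of "q powi \<theta> j" "s j"] q_nonzero s_nonzero j'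
      unfolding L_def \<phi>_def W_def S_def A_def by simp
  qed
  have right: "R i = \<phi> i" if i: "i \<in> {1..k-1}" for i
  proof -
    have i': "i \<in> {1..N}" and ik: "i \<noteq> k"
      using i k by auto
    have "q powi \<theta> i * s k \<noteq> A * s i"
      using q_powi_s_ne_q_powi_s[OF k i' ik[symmetric]] unfolding A_def .
    moreover have "s i * s k \<noteq> q powi \<theta> i * A"
      using s_mult_s_ne_q_powi[OF i' k ik, of "\<theta> i + \<theta> k"] q_nonzero
      unfolding A_def by (simp add: power_int_add)
    ultimately show ?thesis
      using pair_factor_ratio_right_eq_joukowski[of "q powi \<theta> i" A "s i" "s k"] q_nonzero A s_nonzero i' sk
      unfolding R_def \<phi>_def W_def S_def A_def by simp
  qed
  have diagonal: "- (q * s k / A) * \<rho> * q ^ (N - k) = - (W k - S k)"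
    unfolding \<rho>_def W_def S_def A_def[symmetric] joukowski_def
    using q_nonzero A sk by (simp add: power2_eq_square field_simps)
  have "(\<Prod>j\<in>{1..N}. W k - S j) / (\<Prod>j\<in>{1..N}-{k}. W k - W j)
      = (W k - S k) * (\<Prod>j\<in>{1..N}-{k}. \<phi> j)"
    using k by (simp add: \<phi>_def prod_dividef prod.remove)
  also have "(\<Prod>j\<in>{1..N}-{k}. \<phi> j) = (\<Prod>i\<in>{1..k-1}. \<phi> i) * (\<Prod>j\<in>{k+1..N}. \<phi> j)"
  proof -
    have "{1..N} - {k} = {1..k-1} \<union> {k+1..N}"
      using k by auto
    then show ?thesis
      by (simp add: prod.union_disjoint)
  qed
  finally have lagrange_term: "(\<Prod>j\<in>{1..N}. W k - S j) / (\<Prod>j\<in>{1..N}-{k}. W k - W j)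
      = (W k - S k) * ((\<Prod>i\<in>{1..k-1}. \<phi> i) * (\<Prod>j\<in>{k+1..N}. \<phi> j))" .
  have "(\<Prod>j\<in>{k+1..N}. - (q * Z j) / ((1 - Z j) * (1 - q * Z j))) * (\<Prod>j\<in>{k+1..N}. L j)
      = (\<Prod>j\<in>{k+1..N}. - (q * Z j) / ((1 - Z j) * (1 - q * Z j)) * L j)"
    by (rule prod.distrib[symmetric])
  also have "\<dots> = (\<Prod>j\<in>{k+1..N}. q * \<phi> j)"
    by (rule prod.cong[OF refl left])
  also have "\<dots> = q ^ (N - k) * (\<Prod>j\<in>{k+1..N}. \<phi> j)"
    by (simp add: prod.distrib)
  finally have upper: "(\<Prod>j\<in>{k+1..N}. - (q * Z j) / ((1 - Z j) * (1 - q * Z j))) * (\<Prod>j\<in>{k+1..N}. L j)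
      = q ^ (N - k) * (\<Prod>j\<in>{k+1..N}. \<phi> j)" .
  have lower: "(\<Prod>i\<in>{1..k-1}. R i) = (\<Prod>i\<in>{1..k-1}. \<phi> i)"
    using right by simp
  have "rhs_coefficient N q s \<theta> k * eBA N (\<theta>(k := \<theta> k - 1)) s q
      = eBA N \<theta> s q * (- (q * s k / A) * \<rho>
          * ((\<Prod>j\<in>{k+1..N}. - (q * Z j) / ((1 - Z j) * (1 - q * Z j))) * (\<Prod>j\<in>{k+1..N}. L j))
          * (\<Prod>i\<in>{1..k-1}. R i))"
    unfolding coefficient decrement by (simp only: ac_simps)
  also have "\<dots> = eBA N \<theta> s q * (- (q * s k / A) * \<rho> * q ^ (N - k)
          * (\<Prod>j\<in>{k+1..N}. \<phi> j) * (\<Prod>i\<in>{1..k-1}. \<phi> i))"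
    unfolding upper lower by (simp only: ac_simps)
  also have "\<dots> = - eBA N \<theta> s q * ((\<Prod>j\<in>{1..N}. W k - S j) / (\<Prod>j\<in>{1..N}-{k}. W k - W j))"
    unfolding diagonal lagrange_term by (simp add: algebra_simps)
  finally show ?thesis .
qed

end

theorem proposition3p2:
  fixes N :: nat and q :: complex and s :: "nat \<Rightarrow> complex" and \<theta> :: "nat \<Rightarrow> int"
  assumes "N \<ge> 1"
    and "q \<noteq> 0" and "\<forall>i\<in>{1..N}. s i \<noteq> 0"
    and generic: "\<forall>(a::int) (b::nat \<Rightarrow> int). (a \<noteq> 0 \<or> (\<exists>i\<in>{1..N}. b i \<noteq> 0))
                   \<longrightarrow> q powi a * (\<Prod>i\<in>{1..N}. s i powi b i) \<noteq> 1"
    and "\<forall>i\<in>{1..N}. \<theta> i \<ge> 0"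
  shows "(\<Sum>i\<in>{1..N}. (1 - q powi (- \<theta> i)) * s i + (1 - q powi (\<theta> i)) / s i) * eBA N \<theta> s q
       = (\<Sum>k\<in>{1..N}. s N *
            ((-1) ^ (N - k + 1) * q powi (- \<theta> N + (if k = N then 1 else 0)) * q ^ (N - k)
             * (\<Prod>i\<in>{k+1..N-1}. q powi (- \<theta> i + \<theta> k - 1) * s i / s k))
            / (\<Prod>i\<in>{k+1..N}. (1 - q powi (- \<theta> i + \<theta> k - 1) * s i / s k)
                               * (1 - q * q powi (- \<theta> i + \<theta> k - 1) * s i / s k))
            * eBA N (\<theta>(k := \<theta> k - 1)) s q)"
proof -
  interpret generic_parameters N q s
    using assms(2-4) by unfold_locales
  define W S where "W i = joukowski (s i / q powi \<theta> i)" and "S i = joukowski (s i)" for i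
  have "(\<Sum>i\<in>{1..N}. (1 - q powi (- \<theta> i)) * s i + (1 - q powi (\<theta> i)) / s i)
      = (\<Sum>i\<in>{1..N}. S i - W i)"
    using s_nonzero q_nonzero
    by (intro sum.cong) (auto simp: S_def W_def joukowski_def power_int_minus field_simps)
  also have "\<dots> = (\<Sum>i\<in>{1..N}. S i) - (\<Sum>i\<in>{1..N}. W i)"
    by (rule sum_subtractf)
  finally have lhs: "(\<Sum>i\<in>{1..N}. (1 - q powi (- \<theta> i)) * s i + (1 - q powi (\<theta> i)) / s i)
      = (\<Sum>i\<in>{1..N}. S i) - (\<Sum>i\<in>{1..N}. W i)" .
  have "(\<Sum>k\<in>{1..N}. rhs_coefficient N q s \<theta> k * eBA N (\<theta>(k := \<theta> k - 1)) s q)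
      = - eBA N \<theta> s q * (\<Sum>k\<in>{1..N}. (\<Prod>j\<in>{1..N}. W k - S j) / (\<Prod>j\<in>{1..N}-{k}. W k - W j))"
    using rhs_term_eq[OF assms(5)] unfolding W_def S_def by (simp add: sum_distrib_left)
  also have "\<dots> = - eBA N \<theta> s q * ((\<Sum>i\<in>{1..N}. W i) - (\<Sum>i\<in>{1..N}. S i))"
    using sum_prod_diff_divide_prod_diff[OF _ joukowski_inj_on] unfolding W_def by simp
  finally have rhs: "(\<Sum>k\<in>{1..N}. rhs_coefficient N q s \<theta> k * eBA N (\<theta>(k := \<theta> k - 1)) s q)
      = - eBA N \<theta> s q * ((\<Sum>i\<in>{1..N}. W i) - (\<Sum>i\<in>{1..N}. S i))" .
  show ?thesis
    unfolding lhs rhs[unfolded rhs_coefficient_def] by (simp add: algebra_simps)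
qed

end
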